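(* Let $d\ge2$, $L\ge1$, $\sigma>0$, $\lambda>0$, $\gamma>0$, let $\mu_0^\star,\mu_1^\star\in\mathbb{S}^{d-1}$ be orthonormal, and let the rows of $\mathbb{X}$ be i.i.d. with law $\frac12\mathcal{N}(\mu_0^\star,\sigma^2I_d)+\frac12\mathcal{N}(\mu_1^\star,\sigma^2I_d)$. The manifold $\mathcal{M}$ is invariant under the projected gradient descent iteration: if $(\mu_0^k,\mu_1^k)\in\mathcal{M}$, then $(\mu_0^{k+1},\mu_1^{k+1})\in\mathcal{M}$.
   Context: $T^{\mathrm{lin},\mu_0,\mu_1}(\mathbb{X})_\ell=\frac{2}{L}\sum_{k=1}^L\lambda X_\ell^\top(\mu_0\mu_0^\top+\mu_1\mu_1^\top)X_kX_k$; $\mathcal{R}(\mu_0,\mu_1)=\frac1L\sum_\ell\mathbb{E}\|X_\ell-T^{\mathrm{lin},\mu_0,\mu_1}(\mathbb{X})_\ell\|_2^2$ (a smooth function on $\mathbb{R}^d\times\mathbb{R}^d$ with Euclidean gradients $\nabla_{\mu_0}\mathcal{R},\nabla_{\mu_1}\mathcal{R}$). The iteration is, for $i\in\{0,1\}$, $\mu_i^{k+1}=\dfrac{\mu_i^k-\gamma(I_d-\mu_i^k(\mu_i^k)^\top)\nabla_{\mu_i}\mathcal{R}(\mu_0^k,\mu_1^k)}{\|\mu_i^k-\gamma(I_d-\mu_i^k(\mu_i^k)^\top)\nabla_{\mu_i}\mathcal{R}(\mu_0^k,\mu_1^k)\|_2}$. $\mathcal{M}=\{(\mu_0,\mu_1)\in(\mathbb{S}^{d-1})^2:\langle\mu_1^\star,\mu_0\rangle=0,\langle\mu_0^\star,\mu_1\rangle=0,\langle\mu_0,\mu_1\rangle=0\}$.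 *)

theory Defs
  imports "HOL-Probability.Probability"
begin

definition gauss_iso_density :: "real^'d \<Rightarrow> real \<Rightarrow> real^'d \<Rightarrow> real" where
  "gauss_iso_density mu sg x = (\<Prod>i\<in>UNIV. normal_density (mu $ i) sg (x $ i))"

definition mixture_law :: "real^'d \<Rightarrow> real^'d \<Rightarrow> real \<Rightarrow> (real^'d) measure" where
  "mixture_law ms0 ms1 sg = density lborel
     (\<lambda>x. ennreal (1/2 * gauss_iso_density ms0 sg x + 1/2 * gauss_iso_density ms1 sg x))"

definition data_law :: "nat \<Rightarrow> real^'d \<Rightarrow> real^'d \<Rightarrow> real \<Rightarrow> (nat \<Rightarrow> real^'d) measure" where
  "data_law L ms0 ms1 sg = PiM {..<L} (\<lambda>_. mixture_law ms0 ms1 sg)"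

definition T_lin :: "nat \<Rightarrow> real \<Rightarrow> real^'d \<Rightarrow> real^'d \<Rightarrow> (nat \<Rightarrow> real^'d) \<Rightarrow> nat \<Rightarrow> real^'d" where
  "T_lin L lam mu0 mu1 X l = (2 / real L) *\<^sub>R (\<Sum>k<L.
      (lam * ((X l \<bullet> mu0) * (mu0 \<bullet> X k) + (X l \<bullet> mu1) * (mu1 \<bullet> X k))) *\<^sub>R X k)"

definition risk :: "nat \<Rightarrow> real \<Rightarrow> real \<Rightarrow> real^'d \<Rightarrow> real^'d \<Rightarrow> real^'d \<Rightarrow> real^'d \<Rightarrow> real" where
  "risk L sg lam ms0 ms1 mu0 mu1 = (1 / real L) * (\<Sum>l<L.
      integral\<^sup>L (data_law L ms0 ms1 sg) (\<lambda>X. (norm (X l - T_lin L lam mu0 mu1 X l))\<^sup>2))"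

definition grad0 :: "nat \<Rightarrow> real \<Rightarrow> real \<Rightarrow> real^'d \<Rightarrow> real^'d \<Rightarrow> real^'d \<Rightarrow> real^'d \<Rightarrow> real^'d" where
  "grad0 L sg lam ms0 ms1 mu0 mu1 =
     (THE g. ((\<lambda>m. risk L sg lam ms0 ms1 m mu1) has_derivative (\<lambda>h. g \<bullet> h)) (at mu0))"

definition grad1 :: "nat \<Rightarrow> real \<Rightarrow> real \<Rightarrow> real^'d \<Rightarrow> real^'d \<Rightarrow> real^'d \<Rightarrow> real^'d \<Rightarrow> real^'d" where
  "grad1 L sg lam ms0 ms1 mu0 mu1 =
     (THE g. ((\<lambda>m. risk L sg lam ms0 ms1 mu0 m) has_derivative (\<lambda>h. g \<bullet> h)) (at mu1))"

definition sphere_step :: "real \<Rightarrow> real^'d \<Rightarrow> real^'d \<Rightarrow> real^'d" where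
  "sphere_step gamma mu g =
     (let v = mu - gamma *\<^sub>R (g - (mu \<bullet> g) *\<^sub>R mu) in (1 / norm v) *\<^sub>R v)"

definition pgd_step :: "nat \<Rightarrow> real \<Rightarrow> real \<Rightarrow> real \<Rightarrow> real^'d \<Rightarrow> real^'d
    \<Rightarrow> (real^'d) \<times> (real^'d) \<Rightarrow> (real^'d) \<times> (real^'d)" where
  "pgd_step L sg lam gamma ms0 ms1 p =
     (sphere_step gamma (fst p) (grad0 L sg lam ms0 ms1 (fst p) (snd p)),
      sphere_step gamma (snd p) (grad1 L sg lam ms0 ms1 (fst p) (snd p)))"

definition manifoldM :: "real^'d \<Rightarrow> real^'d \<Rightarrow> ((real^'d) \<times> (real^'d)) set" where
  "manifoldM ms0 ms1 = {(mu0, mu1). norm mu0 = 1 \<and> norm mu1 = 1 \<and>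
      ms1 \<bullet> mu0 = 0 \<and> ms0 \<bullet> mu1 = 0 \<and> mu0 \<bullet> mu1 = 0}"

end

(*
  Fix (mu0, mu1) in M and let Q be the orthogonal reflection that fixes the plane span {ms0, mu0}
  and negates its orthogonal complement, which contains ms1 and mu1. The risk is unchanged when
  one orthogonal map acts on the means and the parameters simultaneously (the isotropic Gaussian
  is rotation invariant), when the sign of mu1 is flipped, and when the sign of ms1 is flipped:
  the loss is even in every row, and folding every row into the half-space x . ms1 >= 0 maps the
  mixtures with means ms1 and -ms1 to the same law. Hence m |-> R(m, mu1) is Q-invariant and,
  as Q fixes mu0, its gradient at mu0 is fixed by Q, i.e. lies in span {ms0, mu0}. The projected
  step therefore keeps mu0 on the sphere and in this plane, mu1 likewise in span {ms1, mu1}, and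
  these two planes are orthogonal.
*)

theory Submission
  imports Defs
begin

section \<open>Orthogonal maps preserve Lebesgue measure\<close>

lemma linear_borel_measurable:
  fixes f :: "'u::euclidean_space \<Rightarrow> 'v::euclidean_space"
  shows "linear f \<Longrightarrow> f \<in> borel_measurable borel"
  by (intro borel_measurable_continuous_onI linear_continuous_on linear_conv_bounded_linear[THEN iffD1])

lemma prod_Basis_vec: "(\<Prod>b\<in>(Basis :: (real^'n) set). f b) = (\<Prod>i\<in>UNIV. f (axis i 1))"
  by (simp add: Basis_vec_def prod.reindex inj_on_def axis_eq_axis image_image UNION_singleton_eq_range)

(* Change_Of_Vars shows that orthogonal maps preserve Lebesgue measure only for index types of
   class wellorder; a copy of a finite index type is well-ordered through to_nat. *)
typedef 'a well_ordered = "UNIV :: 'a set" by simp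

instance well_ordered :: (finite) finite
proof
  have "(UNIV :: 'a well_ordered set) = Abs_well_ordered ` UNIV"
    by (metis type_definition.Abs_image[OF type_definition_well_ordered])
  then show "finite (UNIV :: 'a well_ordered set)"
    by (metis finite_imageI finite)
qed

instantiation well_ordered :: (finite) wellorder
begin

definition less_eq_well_ordered :: "'a well_ordered \<Rightarrow> 'a well_ordered \<Rightarrow> bool" where
  "x \<le> y \<longleftrightarrow> to_nat (Rep_well_ordered x) \<le> to_nat (Rep_well_ordered y)"

definition less_well_ordered :: "'a well_ordered \<Rightarrow> 'a well_ordered \<Rightarrow> bool" where
  "x < y \<longleftrightarrow> to_nat (Rep_well_ordered x) < to_nat (Rep_well_ordered y)"

instance
proof
  fix x y z :: "'a well_ordered"
  show "x < y \<longleftrightarrow> x \<le> y \<and> \<not> y \<le> x" "x \<le> x" "x \<le> y \<or> y \<le> x"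
    by (auto simp: less_eq_well_ordered_def less_well_ordered_def)
  show "x \<le> y \<Longrightarrow> y \<le> z \<Longrightarrow> x \<le> z"
    by (simp add: less_eq_well_ordered_def)
  show "x \<le> y \<Longrightarrow> y \<le> x \<Longrightarrow> x = y"
    by (simp add: less_eq_well_ordered_def Rep_well_ordered_inject)
next
  fix P :: "'a well_ordered \<Rightarrow> bool" and a :: "'a well_ordered"
  assume step: "\<And>x. (\<And>y. y < x \<Longrightarrow> P y) \<Longrightarrow> P x"
  show "P a"
    by (induction a rule: measure_induct_rule[where f="\<lambda>x. to_nat (Rep_well_ordered x)"])
       (rule step, simp add: less_well_ordered_def)
qed

end

lemma distr_lborel_orthogonal_transformation_wellorder:
  fixes f :: "real^'n::{finite,wellorder} \<Rightarrow> real^'n::_"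
  assumes f: "orthogonal_transformation f"
  shows "distr lborel borel f = lborel"
proof (rule lborel_eqI[symmetric])
  have [measurable]: "f \<in> borel_measurable borel"
    using f by (simp add: linear_borel_measurable orthogonal_transformation)
  obtain g where g: "orthogonal_transformation g" "\<And>x. f (g x) = x" "\<And>x. g (f x) = x"
    using orthogonal_transformation_inv[OF f] f
    by (metis orthogonal_transformation_bij bij_inv_eq_iff)
  fix l u :: "real^'n::{finite,wellorder}"
  assume lu: "\<And>b. b \<in> Basis \<Longrightarrow> l \<bullet> b \<le> u \<bullet> b"
  have "f -` box l u = g ` box l u"
    using g by (auto simp: image_iff) (metis g(3))
  moreover have "f -` box l u \<in> sets lborel"
    using measurable_sets_borel[OF \<open>f \<in> borel_measurable borel\<close>] by simp
  ultimately have "emeasure (distr lborel borel f) (box l u) = emeasure lebesgue (g ` box l u)"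
    by (simp add: emeasure_distr)
  also have "\<dots> = measure lebesgue (box l u)"
    by (simp add: emeasure_eq_measure2 measurable_orthogonal_image measure_orthogonal_image g(1))
  also have "\<dots> = (\<Prod>b\<in>Basis. (u - l) \<bullet> b)"
    using lu by (simp add: measure_def emeasure_completion)
  finally show "emeasure (distr lborel borel f) (box l u) = (\<Prod>b\<in>Basis. (u - l) \<bullet> b)" .
qed simp

definition to_well_ordered :: "real^'n \<Rightarrow> real^'n well_ordered" where
  "to_well_ordered x = (\<chi> i. x $ Rep_well_ordered i)"

definition of_well_ordered :: "real^'n well_ordered \<Rightarrow> real^'n" where
  "of_well_ordered y = (\<chi> j. y $ Abs_well_ordered j)"

lemma of_to_well_ordered [simp]:
  "of_well_ordered (to_well_ordered x) = x" "to_well_ordered (of_well_ordered y) = y"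
  by (simp_all add: to_well_ordered_def of_well_ordered_def vec_eq_iff
      Abs_well_ordered_inverse Rep_well_ordered_inverse)

lemma linear_to_well_ordered: "linear to_well_ordered" and linear_of_well_ordered: "linear of_well_ordered"
  by (auto intro!: linearI simp: to_well_ordered_def of_well_ordered_def vec_eq_iff)

lemma sum_Rep_well_ordered: "(\<Sum>i\<in>UNIV. f (Rep_well_ordered i)) = (\<Sum>j\<in>UNIV. f j)"
  by (rule sum.reindex_bij_betw)
     (simp add: bij_betw_def inj_on_def Rep_well_ordered_inject type_definition.Rep_range[OF type_definition_well_ordered])

lemma prod_Rep_well_ordered: "(\<Prod>i\<in>UNIV. f (Rep_well_ordered i)) = (\<Prod>j\<in>UNIV. f j)"
  by (rule prod.reindex_bij_betw)
     (simp add: bij_betw_def inj_on_def Rep_well_ordered_inject type_definition.Rep_range[OF type_definition_well_ordered])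

lemma inner_to_well_ordered: "to_well_ordered x \<bullet> to_well_ordered y = x \<bullet> y"
  by (simp add: inner_vec_def to_well_ordered_def sum_Rep_well_ordered[where f="\<lambda>j. x $ j * y $ j"])

lemma inner_of_well_ordered: "of_well_ordered x \<bullet> of_well_ordered y = x \<bullet> y"
  by (metis of_to_well_ordered(2) inner_to_well_ordered)

lemma distr_lborel_to_well_ordered: "distr lborel borel (to_well_ordered :: real^'n \<Rightarrow> _) = lborel"
proof (rule lborel_eqI[symmetric])
  have [measurable]: "(to_well_ordered :: real^'n \<Rightarrow> _) \<in> borel_measurable borel"
    by (rule linear_borel_measurable[OF linear_to_well_ordered])
  fix l u :: "real^'n well_ordered"
  assume lu: "\<And>b. b \<in> Basis \<Longrightarrow> l \<bullet> b \<le> u \<bullet> b"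
  have "(to_well_ordered :: real^'n \<Rightarrow> _) -` box l u = box (of_well_ordered l) (of_well_ordered u)"
    by (auto simp: mem_box_cart to_well_ordered_def of_well_ordered_def)
       (metis Abs_well_ordered_inverse UNIV_I Rep_well_ordered_inverse)+
  moreover have "of_well_ordered l \<bullet> b \<le> of_well_ordered u \<bullet> b" if "b \<in> Basis" for b :: "real^'n"
  proof -
    obtain i where b: "b = axis i 1" using \<open>b \<in> Basis\<close> by (auto simp: Basis_vec_def)
    have "l \<bullet> axis (Abs_well_ordered i) 1 \<le> u \<bullet> axis (Abs_well_ordered i) 1"
      by (rule lu) (auto simp: Basis_vec_def)
    then show ?thesis by (simp add: b of_well_ordered_def cart_eq_inner_axis[symmetric])
  qed
  ultimately have "emeasure (distr lborel borel to_well_ordered) (box l u)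
      = (\<Prod>b\<in>(Basis :: (real^'n) set). (of_well_ordered u - of_well_ordered l) \<bullet> b)"
    by (simp add: emeasure_distr)
  also have "\<dots> = (\<Prod>b\<in>Basis. (u - l) \<bullet> b)"
    unfolding prod_Basis_vec
    by (simp add: inner_axis of_well_ordered_def Rep_well_ordered_inverse
        prod_Rep_well_ordered[symmetric, where f="\<lambda>j. u $ Abs_well_ordered j - l $ Abs_well_ordered j"])
  finally show "emeasure (distr lborel borel to_well_ordered) (box l u) = (\<Prod>b\<in>Basis. (u - l) \<bullet> b)" .
qed simp

theorem distr_lborel_orthogonal_transformation:
  fixes f :: "real^'n \<Rightarrow> real^'n"
  assumes f: "orthogonal_transformation f"
  shows "distr lborel borel f = lborel"
proof -
  define f' where "f' = to_well_ordered \<circ> f \<circ> of_well_ordered"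
  have "linear f'"
    unfolding f'_def using f linear_to_well_ordered linear_of_well_ordered
    by (intro linear_compose) (auto simp: orthogonal_transformation)
  then have "orthogonal_transformation f'"
    using f by (simp add: orthogonal_transformation_def f'_def inner_to_well_ordered inner_of_well_ordered)
  then have f': "distr lborel borel f' = lborel"
    by (rule distr_lborel_orthogonal_transformation_wellorder)
  have [measurable]: "f' \<in> borel_measurable borel" "f \<in> borel_measurable borel"
    "(to_well_ordered :: real^'n \<Rightarrow> _) \<in> borel_measurable borel"
    "(of_well_ordered :: _ \<Rightarrow> real^'n) \<in> borel_measurable borel"
    using \<open>linear f'\<close> f linear_to_well_ordered linear_of_well_ordered
    by (auto intro!: linear_borel_measurable simp: orthogonal_transformation)
  have of_wo: "distr lborel borel (of_well_ordered :: _ \<Rightarrow> real^'n) = lborel"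
    by (subst distr_lborel_to_well_ordered[symmetric], subst distr_distr) (auto simp: o_def distr_id2)
  have "f = of_well_ordered \<circ> f' \<circ> to_well_ordered"
    by (simp add: f'_def fun_eq_iff)
  then have "distr lborel borel f
      = distr (distr (distr lborel borel to_well_ordered) borel f') borel of_well_ordered"
    by (simp add: distr_distr o_assoc)
  also have "\<dots> = lborel"
    by (simp add: distr_lborel_to_well_ordered f' of_wo)
  finally show ?thesis .
qed

section \<open>Isotropic Gaussians and their mixture\<close>

lemma gauss_iso_density_radial:
  "gauss_iso_density c sg (x::real^'d) =
     (1 / sqrt (2 * pi * sg\<^sup>2)) ^ CARD('d) * exp (- (norm (x - c))\<^sup>2 / (2 * sg\<^sup>2))"
proof -
  have "(norm (x - c))\<^sup>2 = (\<Sum>i\<in>UNIV. (x $ i - c $ i)\<^sup>2)"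
    unfolding power2_norm_eq_inner inner_vec_def by (simp add: power2_eq_square)
  then show ?thesis
    unfolding gauss_iso_density_def normal_density_def prod.distrib
    by (simp add: exp_sum[symmetric] sum_negf sum_divide_distrib)
qed

lemma gauss_iso_density_orthogonal_transformation:
  fixes f :: "real^'d \<Rightarrow> real^'d"
  assumes "orthogonal_transformation f"
  shows "gauss_iso_density (f c) sg (f x) = gauss_iso_density c sg x"
proof -
  have "norm (f x - f c) = norm (x - c)"
    using assms by (simp add: orthogonal_transformation linear_diff[symmetric])
  then show ?thesis by (simp add: gauss_iso_density_radial)
qed

lemma gauss_iso_density_nonneg [simp]: "0 \<le> gauss_iso_density c sg x"
  unfolding gauss_iso_density_def by (simp add: prod_nonneg)

lemma borel_measurable_gauss_iso_density [measurable]: "gauss_iso_density c sg \<in> borel_measurable borel"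
  unfolding gauss_iso_density_def[abs_def] by measurable

lemma gauss_iso_density_Basis:
  "gauss_iso_density c sg (x::real^'d) = (\<Prod>b\<in>Basis. normal_density (c \<bullet> b) sg (x \<bullet> b))"
  unfolding gauss_iso_density_def prod_Basis_vec by (simp add: cart_eq_inner_axis)

lemma nn_integral_gauss_iso_density:
  assumes "0 < sg"
  shows "(\<integral>\<^sup>+x. gauss_iso_density c sg (x::real^'d) \<partial>lborel) = 1"
proof -
  have "(\<integral>\<^sup>+x. gauss_iso_density c sg (x::real^'d) \<partial>lborel)
      = (\<integral>\<^sup>+x. (\<Prod>b\<in>Basis. ennreal (normal_density (c \<bullet> b) sg (x \<bullet> b))) \<partial>lborel)"
    by (simp add: gauss_iso_density_Basis prod_ennreal)
  also have "\<dots> = (\<Prod>b\<in>(Basis::(real^'d) set). \<integral>\<^sup>+t. normal_density (c \<bullet> b) sg t \<partial>lborel)"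
    by (rule nn_integral_lborel_prod) auto
  also have "\<dots> = 1"
    using assms by (simp add: nn_integral_eq_integral integral_normal_density)
  finally show ?thesis .
qed

lemma sets_mixture_law [measurable_cong, simp]: "sets (mixture_law a b sg) = sets borel"
  by (simp add: mixture_law_def)

lemma space_mixture_law [simp]: "space (mixture_law a b sg) = UNIV"
  by (simp add: mixture_law_def)

lemma ennreal_half_sum:
  "0 \<le> u \<Longrightarrow> 0 \<le> v \<Longrightarrow> ennreal (1/2 * u + 1/2 * v) = ennreal (1/2) * ennreal u + ennreal (1/2) * ennreal v"
  by (simp only: ennreal_plus ennreal_mult mult_nonneg_nonneg divide_nonneg_nonneg zero_le_one
      zero_le_numeral)

lemma emeasure_mixture_law:
  assumes "A \<in> sets borel"
  shows "emeasure (mixture_law a b sg) A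
    = ennreal (1/2) * (\<integral>\<^sup>+x. ennreal (gauss_iso_density a sg x) * indicator A x \<partial>lborel)
      + ennreal (1/2) * (\<integral>\<^sup>+x. ennreal (gauss_iso_density b sg x) * indicator A x \<partial>lborel)"
proof -
  have "emeasure (mixture_law a b sg) A = (\<integral>\<^sup>+x. ennreal (1/2 * gauss_iso_density a sg x
      + 1/2 * gauss_iso_density b sg x) * indicator A x \<partial>lborel)"
    using assms by (simp add: mixture_law_def emeasure_density)
  also have "\<dots> = (\<integral>\<^sup>+x. ennreal (1/2) * (ennreal (gauss_iso_density a sg x) * indicator A x)
      + ennreal (1/2) * (ennreal (gauss_iso_density b sg x) * indicator A x) \<partial>lborel)"
    by (intro nn_integral_cong) (simp only: ennreal_half_sum gauss_iso_density_nonneg distrib_right mult.assoc)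
  also have "\<dots> = ennreal (1/2) * (\<integral>\<^sup>+x. ennreal (gauss_iso_density a sg x) * indicator A x \<partial>lborel)
      + ennreal (1/2) * (\<integral>\<^sup>+x. ennreal (gauss_iso_density b sg x) * indicator A x \<partial>lborel)"
    using assms by (simp add: nn_integral_add nn_integral_cmult)
  finally show ?thesis .
qed

lemma prob_space_mixture_law:
  assumes "0 < sg"
  shows "prob_space (mixture_law a b sg :: (real^'d) measure)"
proof (rule prob_spaceI)
  have "emeasure (mixture_law a b sg :: (real^'d) measure) UNIV = ennreal (1/2) * 1 + ennreal (1/2) * 1"
    using emeasure_mixture_law[of UNIV a b sg]
    by (simp only: sets_UNIV indicator_UNIV mult_1_right nn_integral_gauss_iso_density[OF assms]
        sets.top[of borel, unfolded space_borel] simp_thms)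
  also have "\<dots> = 1"
    by (simp only: mult_1_right ennreal_plus[symmetric]) simp
  finally show "emeasure (mixture_law a b sg :: (real^'d) measure) (space (mixture_law a b sg)) = 1"
    by simp
qed

lemma one_plus_sum_le_prod:
  assumes "finite A" "\<And>i. i \<in> A \<Longrightarrow> 0 \<le> f i"
  shows "1 + sum f A \<le> (\<Prod>i\<in>A. 1 + f i :: real)"
  using assms
proof (induction A rule: finite_induct)
  case (insert a A)
  have P: "1 \<le> (\<Prod>i\<in>A. 1 + f i)" using insert by (intro prod_ge_1) auto
  have "1 + sum f (insert a A) = f a + (1 + sum f A)" using insert by simp
  also have "\<dots> \<le> f a * (\<Prod>i\<in>A. 1 + f i) + (\<Prod>i\<in>A. 1 + f i)"
    using insert P by (intro add_mono mult_left_mono_neg) (auto intro: order_trans[OF _ mult_left_mono[OF P]])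
  also have "\<dots> = (\<Prod>i\<in>insert a A. 1 + f i)" using insert by (simp add: algebra_simps)
  finally show ?case .
qed simp

lemma integrable_normal_density_poly:
  assumes "0 < sg"
  shows "integrable lborel (\<lambda>t. normal_density m sg t * (1 + \<bar>t\<bar>) ^ p)"
proof (rule Bochner_Integration.integrable_bound)
  let ?bound = "\<lambda>t. (1 + \<bar>m\<bar>) ^ p * (\<Sum>k\<le>p. of_nat (p choose k) * (normal_density m sg t * \<bar>t - m\<bar> ^ k))"
  show "integrable lborel ?bound"
    using assms by (auto intro!: integrable_sum integrable_normal_moment_abs)
  show "AE t in lborel. norm (normal_density m sg t * (1 + \<bar>t\<bar>) ^ p) \<le> norm (?bound t)"
  proof (rule AE_I2)
    fix t
    have "\<bar>t\<bar> \<le> \<bar>m\<bar> + \<bar>t - m\<bar>" "0 \<le> \<bar>m\<bar> * \<bar>t - m\<bar>"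
      "(1 + \<bar>m\<bar>) * (1 + \<bar>t - m\<bar>) = 1 + \<bar>m\<bar> + \<bar>t - m\<bar> + \<bar>m\<bar> * \<bar>t - m\<bar>"
      using abs_triangle_ineq[of m "t - m"] by (simp_all add: algebra_simps)
    then have "1 + \<bar>t\<bar> \<le> (1 + \<bar>m\<bar>) * (1 + \<bar>t - m\<bar>)"
      by linarith
    then have "(1 + \<bar>t\<bar>) ^ p \<le> (1 + \<bar>m\<bar>) ^ p * (1 + \<bar>t - m\<bar>) ^ p"
      by (metis power_mono power_mult_distrib abs_ge_zero add_nonneg_nonneg zero_le_one)
    also have "(1 + \<bar>t - m\<bar>) ^ p = (\<Sum>k\<le>p. of_nat (p choose k) * \<bar>t - m\<bar> ^ k)"
      by (subst add.commute) (simp add: binomial_ring mult.commute)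
    finally have "normal_density m sg t * (1 + \<bar>t\<bar>) ^ p
        \<le> normal_density m sg t * ((1 + \<bar>m\<bar>) ^ p * (\<Sum>k\<le>p. of_nat (p choose k) * \<bar>t - m\<bar> ^ k))"
      by (rule mult_left_mono) simp
    also have "\<dots> = ?bound t"
      by (simp add: sum_distrib_left algebra_simps)
    finally show "norm (normal_density m sg t * (1 + \<bar>t\<bar>) ^ p) \<le> norm (?bound t)"
      by (simp add: sum_nonneg)
  qed
qed measurable

lemma integrable_gauss_iso_density_poly:
  assumes "0 < sg"
  shows "integrable lborel (\<lambda>x::real^'d. gauss_iso_density c sg x * (1 + norm x) ^ p)"
proof (rule integrableI_nonneg)
  show "AE x in lborel. 0 \<le> gauss_iso_density c sg (x::real^'d) * (1 + norm x) ^ p" by simp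
  have "(\<integral>\<^sup>+x. ennreal (gauss_iso_density c sg (x::real^'d) * (1 + norm x) ^ p) \<partial>lborel)
     \<le> (\<integral>\<^sup>+x. (\<Prod>b\<in>Basis. ennreal (normal_density (c \<bullet> b) sg (x \<bullet> b) * (1 + \<bar>x \<bullet> b\<bar>) ^ p)) \<partial>lborel)"
  proof (rule nn_integral_mono)
    fix x :: "real^'d"
    have "1 + norm x \<le> 1 + (\<Sum>b\<in>Basis. \<bar>x \<bullet> b\<bar>)" using norm_le_l1[of x] by simp
    also have "\<dots> \<le> (\<Prod>b\<in>Basis. 1 + \<bar>x \<bullet> b\<bar>)" by (rule one_plus_sum_le_prod) auto
    finally have "(1 + norm x) ^ p \<le> (\<Prod>b\<in>Basis. 1 + \<bar>x \<bullet> b\<bar>) ^ p" by (intro power_mono) auto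
    then have "gauss_iso_density c sg x * (1 + norm x) ^ p \<le> gauss_iso_density c sg x * (\<Prod>b\<in>Basis. 1 + \<bar>x \<bullet> b\<bar>) ^ p"
      by (intro mult_left_mono) auto
    also have "\<dots> = (\<Prod>b\<in>Basis. normal_density (c \<bullet> b) sg (x \<bullet> b) * (1 + \<bar>x \<bullet> b\<bar>) ^ p)"
      by (simp add: gauss_iso_density_Basis prod.distrib prod_power_distrib)
    finally show "ennreal (gauss_iso_density c sg x * (1 + norm x) ^ p)
       \<le> (\<Prod>b\<in>Basis. ennreal (normal_density (c \<bullet> b) sg (x \<bullet> b) * (1 + \<bar>x \<bullet> b\<bar>) ^ p))"
      by (subst prod_ennreal) (auto intro!: ennreal_leI)
  qed
  also have "\<dots> = (\<Prod>b\<in>(Basis::(real^'d) set). (\<integral>\<^sup>+t. ennreal (normal_density (c \<bullet> b) sg t * (1 + \<bar>t\<bar>) ^ p) \<partial>lborel))"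
    by (rule nn_integral_lborel_prod) auto
  also have "\<dots> < \<infinity>"
  proof -
    have "(\<integral>\<^sup>+t. ennreal (normal_density (c \<bullet> b) sg t * (1 + \<bar>t\<bar>) ^ p) \<partial>lborel) \<noteq> \<infinity>" for b :: "real^'d"
      using assms by (subst nn_integral_eq_integral) (auto intro!: integrable_normal_density_poly)
    then show ?thesis by (simp add: less_top[symmetric] ennreal_prod_eq_top top_unique)
  qed
  finally show "(\<integral>\<^sup>+x. ennreal (gauss_iso_density c sg (x::real^'d) * (1 + norm x) ^ p) \<partial>lborel) < \<infinity>" .
qed measurable

lemma integrable_mixture_law_poly:
  assumes "0 < sg"
  shows "integrable (mixture_law a b sg) (\<lambda>x::real^'d. (1 + norm x) ^ p)"
proof -
  have "integrable lborel (\<lambda>x::real^'d. 1/2 * (gauss_iso_density a sg x * (1 + norm x) ^ p)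
          + 1/2 * (gauss_iso_density b sg x * (1 + norm x) ^ p))"
    using assms by (auto intro!: integrable_add integrable_mult_right integrable_gauss_iso_density_poly)
  then have "integrable lborel (\<lambda>x::real^'d. (1/2 * gauss_iso_density a sg x + 1/2 * gauss_iso_density b sg x) *\<^sub>R (1 + norm x) ^ p)"
    by (simp add: algebra_simps)
  then show ?thesis
    unfolding mixture_law_def by (subst integrable_density) auto
qed

section \<open>Symmetries of the mixture law\<close>

lemma distr_mixture_law_orthogonal_transformation:
  fixes Q :: "real^'d \<Rightarrow> real^'d"
  assumes Q: "orthogonal_transformation Q"
  shows "distr (mixture_law a b sg) borel Q = mixture_law (Q a) (Q b) sg"
proof -
  have [measurable]: "Q \<in> borel_measurable borel"
    using Q by (simp add: linear_borel_measurable orthogonal_transformation)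
  define g where "g y = ennreal (1/2 * gauss_iso_density (Q a) sg y + 1/2 * gauss_iso_density (Q b) sg y)"
    for y
  have "mixture_law (Q a) (Q b) sg = density (distr lborel borel Q) g"
    unfolding mixture_law_def distr_lborel_orthogonal_transformation[OF Q] g_def ..
  also have "\<dots> = distr (density lborel (\<lambda>x. g (Q x))) borel Q"
    by (rule density_distr) (simp_all add: g_def[abs_def])
  also have "density lborel (\<lambda>x. g (Q x)) = mixture_law a b sg"
    unfolding mixture_law_def g_def gauss_iso_density_orthogonal_transformation[OF Q] ..
  finally show ?thesis ..
qed

definition halfspace_fold :: "real^'d \<Rightarrow> real^'d \<Rightarrow> real^'d" where
  "halfspace_fold b x = (if x \<bullet> b < 0 then - x else x)"

lemma borel_measurable_halfspace_fold [measurable]: "halfspace_fold b \<in> borel_measurable borel"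
  unfolding halfspace_fold_def[abs_def] by measurable

lemma AE_lborel_inner_nonzero:
  assumes "(b::real^'d) \<noteq> 0"
  shows "AE x in lborel. x \<bullet> b \<noteq> 0"
proof (rule AE_I')
  have "negligible {x::real^'d. b \<bullet> x = 0}"
    using assms by (intro negligible_hyperplane) simp
  then have "{x::real^'d. b \<bullet> x = 0} \<in> null_sets lebesgue"
    by (simp add: negligible_iff_null_sets)
  moreover have "{x::real^'d. b \<bullet> x = 0} \<in> sets lborel"
    by measurable
  ultimately show "{x::real^'d. b \<bullet> x = 0} \<in> null_sets lborel"
    using null_sets_completion_iff by blast
qed (auto simp: inner_commute)

lemma distr_mixture_law_halfspace_fold:
  fixes a b :: "real^'d"
  shows "distr (mixture_law a (- b) sg) borel (halfspace_fold b) = distr (mixture_law a b sg) borel (halfspace_fold b)"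
proof (cases "b = 0")
  case False
  show ?thesis
  proof (rule measure_eqI)
    fix A :: "(real^'d) set"
    assume "A \<in> sets (distr (mixture_law a (- b) sg) borel (halfspace_fold b))"
    then have [measurable]: "A \<in> sets borel" by simp
    define I where "I x = (indicator (halfspace_fold b -` A) x :: ennreal)" for x
    have [measurable]: "I \<in> borel_measurable borel"
      unfolding I_def by measurable
    have "(\<integral>\<^sup>+x. ennreal (gauss_iso_density (- b) sg x) * I x \<partial>lborel)
        = (\<integral>\<^sup>+x. ennreal (gauss_iso_density (- b) sg (- x)) * I (- x) \<partial>lborel)"
      using nn_integral_distr[of uminus lborel borel "\<lambda>x. ennreal (gauss_iso_density (- b) sg x) * I x"]
      by (simp add: distr_lborel_orthogonal_transformation orthogonal_transformation_neg)
    also have "\<dots> = (\<integral>\<^sup>+x. ennreal (gauss_iso_density b sg x) * I x \<partial>lborel)"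
    proof (rule nn_integral_cong_AE)
      show "AE x in lborel. ennreal (gauss_iso_density (- b) sg (- x)) * I (- x)
          = ennreal (gauss_iso_density b sg x) * I x"
        using AE_lborel_inner_nonzero[OF False]
        by eventually_elim
           (simp add: I_def halfspace_fold_def indicator_def
             gauss_iso_density_orthogonal_transformation[of uminus, simplified orthogonal_transformation_neg])
    qed
    finally show "emeasure (distr (mixture_law a (- b) sg) borel (halfspace_fold b)) A
        = emeasure (distr (mixture_law a b sg) borel (halfspace_fold b)) A"
      using measurable_sets_borel[OF borel_measurable_halfspace_fold, of A]
      by (simp add: emeasure_distr I_def emeasure_mixture_law)
  qed simp
qed simp

section \<open>Symmetries of the risk\<close>

lemma measurable_compose_PiM:
  assumes "f \<in> measurable M N"
  shows "compose I f \<in> measurable (PiM I (\<lambda>_. M)) (PiM I (\<lambda>_. N))"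
  unfolding compose_def using assms
  by (intro measurable_restrict) (auto intro: measurable_compose[OF measurable_component_singleton])

lemma integral_PiM_compose:
  fixes F :: "('i \<Rightarrow> 'b) \<Rightarrow> real"
  assumes "finite I" "prob_space M" "prob_space N" "f \<in> measurable M N"
    and F: "F \<in> borel_measurable (PiM I (\<lambda>_. N))"
  shows "(\<integral>X. F (compose I f X) \<partial>PiM I (\<lambda>_. M)) = (\<integral>X. F X \<partial>PiM I (\<lambda>_. distr M N f))"
proof -
  have "PiM I (\<lambda>_. distr M N f) = distr (PiM I (\<lambda>_. M)) (PiM I (\<lambda>_. N)) (compose I f)"
    using assms by (intro distr_PiM_finite_prob_space'[symmetric]) auto
  then show ?thesis
    using integral_distr[OF measurable_compose_PiM[OF \<open>f \<in> measurable M N\<close>] F] by simp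
qed

lemma distr_mixture_law_target: "distr M (mixture_law a b sg) f = distr M borel f"
  by (rule distr_cong) simp_all

lemma borel_measurable_data_law_component:
  fixes a b :: "real^'d"
  assumes "k < L"
  shows "(\<lambda>X. X k) \<in> borel_measurable (data_law L a b sg)"
  using measurable_component_singleton[of k "{..<L}" "\<lambda>_. mixture_law a b sg"] assms
  by (simp add: data_law_def measurable_cong_sets[OF refl sets_mixture_law])

definition sq_residual :: "nat \<Rightarrow> real \<Rightarrow> real^'d \<Rightarrow> real^'d \<Rightarrow> (nat \<Rightarrow> real^'d) \<Rightarrow> nat \<Rightarrow> real" where
  "sq_residual L lam mu0 mu1 X l = (norm (X l - T_lin L lam mu0 mu1 X l))\<^sup>2"

lemma risk_eq_sum_sq_residual:
  "risk L sg lam a b mu0 mu1 = 1 / real L * (\<Sum>l<L. \<integral>X. sq_residual L lam mu0 mu1 X l \<partial>data_law L a b sg)"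
  by (simp add: risk_def sq_residual_def)

lemma borel_measurable_sq_residual:
  fixes a b :: "real^'d"
  assumes "l < L"
  shows "(\<lambda>X. sq_residual L lam mu0 mu1 X l) \<in> borel_measurable (data_law L a b sg)"
proof -
  have norm: "(\<lambda>X. norm (f X)) \<in> borel_measurable (data_law L a b sg)"
    if "f \<in> borel_measurable (data_law L a b sg)" for f :: "_ \<Rightarrow> real^'d"
    using measurable_compose[OF that borel_measurable_norm] by simp
  show ?thesis
    unfolding sq_residual_def T_lin_def using assms
    by (intro borel_measurable_power norm borel_measurable_diff borel_measurable_scaleR
        borel_measurable_sum borel_measurable_times borel_measurable_add borel_measurable_inner
        borel_measurable_const borel_measurable_data_law_component) simp_all
qed

lemma T_lin_orthogonal_transformation:
  fixes X Y :: "nat \<Rightarrow> real^'d"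
  assumes Q: "orthogonal_transformation Q" and Y: "\<And>k. k < L \<Longrightarrow> Y k = Q (X k)" and "l < L"
  shows "T_lin L lam (Q mu0) (Q mu1) Y l = Q (T_lin L lam mu0 mu1 X l)"
proof -
  have lin: "linear Q" and QQ: "\<And>x y. Q x \<bullet> Q y = x \<bullet> y"
    using Q by (auto simp: orthogonal_transformation_def)
  have "(lam * ((Y l \<bullet> Q mu0) * (Q mu0 \<bullet> Y k) + (Y l \<bullet> Q mu1) * (Q mu1 \<bullet> Y k))) *\<^sub>R Y k
      = Q ((lam * ((X l \<bullet> mu0) * (mu0 \<bullet> X k) + (X l \<bullet> mu1) * (mu1 \<bullet> X k))) *\<^sub>R X k)"
    if "k < L" for k
    using Y[OF that] Y[OF \<open>l < L\<close>] by (simp only: QQ linear_scale[OF lin])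
  then show ?thesis
    unfolding T_lin_def by (simp add: linear_scale[OF lin] linear_sum[OF lin])
qed

lemma sq_residual_orthogonal_transformation:
  fixes X Y :: "nat \<Rightarrow> real^'d"
  assumes Q: "orthogonal_transformation Q" and Y: "\<And>k. k < L \<Longrightarrow> Y k = Q (X k)" and "l < L"
  shows "sq_residual L lam (Q mu0) (Q mu1) Y l = sq_residual L lam mu0 mu1 X l"
proof -
  have "Y l - T_lin L lam (Q mu0) (Q mu1) Y l = Q (X l - T_lin L lam mu0 mu1 X l)"
    using Q by (simp add: T_lin_orthogonal_transformation[OF assms] Y \<open>l < L\<close> linear_diff
        orthogonal_transformation_linear)
  then show ?thesis
    using Q by (simp add: sq_residual_def orthogonal_transformation)
qed

lemma T_lin_sign_change:
  fixes X Y :: "nat \<Rightarrow> real^'d"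
  assumes Y: "\<And>k. k < L \<Longrightarrow> Y k = s k *\<^sub>R X k" and s: "\<And>k. k < L \<Longrightarrow> s k * s k = 1" and "l < L"
  shows "T_lin L lam mu0 mu1 Y l = s l *\<^sub>R T_lin L lam mu0 mu1 X l"
proof -
  define t where "t Z k = (lam * ((Z l \<bullet> mu0) * (mu0 \<bullet> Z k) + (Z l \<bullet> mu1) * (mu1 \<bullet> Z k))) *\<^sub>R Z k"
    for Z :: "nat \<Rightarrow> real^'d" and k
  have "t Y k = s l *\<^sub>R t X k" if "k < L" for k
  proof -
    have "t Y k = (s l * (s k * s k) * (lam * ((X l \<bullet> mu0) * (mu0 \<bullet> X k) + (X l \<bullet> mu1) * (mu1 \<bullet> X k)))) *\<^sub>R X k"
      using Y[OF that] Y[OF \<open>l < L\<close>] by (simp add: t_def algebra_simps)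
    then show ?thesis
      using s[OF that] by (simp add: t_def)
  qed
  then have "(\<Sum>k<L. t Y k) = s l *\<^sub>R (\<Sum>k<L. t X k)"
    by (simp add: scaleR_sum_right)
  then show ?thesis
    by (simp add: T_lin_def t_def)
qed

lemma sq_residual_sign_change:
  assumes Y: "\<And>k. k < L \<Longrightarrow> Y k = s k *\<^sub>R X k" and s: "\<And>k. k < L \<Longrightarrow> s k * s k = 1" and "l < L"
  shows "sq_residual L lam mu0 mu1 Y l = sq_residual L lam mu0 mu1 X l"
proof -
  have "Y l - T_lin L lam mu0 mu1 Y l = s l *\<^sub>R (X l - T_lin L lam mu0 mu1 X l)"
    using T_lin_sign_change[OF assms] Y[OF \<open>l < L\<close>] by (simp add: scaleR_diff_right)
  then have "sq_residual L lam mu0 mu1 Y l = (s l * s l) * sq_residual L lam mu0 mu1 X l"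
    by (simp add: sq_residual_def power2_eq_square)
  then show ?thesis
    using s[OF \<open>l < L\<close>] by simp
qed

lemma sq_residual_halfspace_fold:
  "l < L \<Longrightarrow> sq_residual L lam mu0 mu1 (compose {..<L} (halfspace_fold b) X) l = sq_residual L lam mu0 mu1 X l"
  by (rule sq_residual_sign_change[where s="\<lambda>k. if X k \<bullet> b < 0 then -1 else 1"])
     (auto simp: compose_def halfspace_fold_def)

lemma integral_data_law_compose:
  fixes F :: "(nat \<Rightarrow> real^'d) \<Rightarrow> real" and f :: "real^'d \<Rightarrow> real^'d"
  assumes "0 < sg" "f \<in> borel_measurable borel" "F \<in> borel_measurable (data_law L a b sg)"
  shows "(\<integral>X. F (compose {..<L} f X) \<partial>data_law L a b sg)
    = (\<integral>X. F X \<partial>PiM {..<L} (\<lambda>_. distr (mixture_law a b sg) borel f))"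
  using integral_PiM_compose[of "{..<L}" "mixture_law a b sg" "mixture_law a b sg" f F] assms
  by (simp add: data_law_def prob_space_mixture_law distr_mixture_law_target)

lemma risk_orthogonal_transformation:
  fixes Q :: "real^'d \<Rightarrow> real^'d"
  assumes Q: "orthogonal_transformation Q" and "0 < sg"
  shows "risk L sg lam (Q a) (Q b) (Q mu0) (Q mu1) = risk L sg lam a b mu0 mu1"
proof -
  have [measurable]: "Q \<in> borel_measurable borel"
    using Q by (simp add: linear_borel_measurable orthogonal_transformation)
  have "(\<integral>X. sq_residual L lam (Q mu0) (Q mu1) X l \<partial>data_law L (Q a) (Q b) sg)
      = (\<integral>X. sq_residual L lam mu0 mu1 X l \<partial>data_law L a b sg)" if "l < L" for l
  proof -
    have "(\<integral>X. sq_residual L lam (Q mu0) (Q mu1) (compose {..<L} Q X) l \<partial>data_law L a b sg)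
        = (\<integral>X. sq_residual L lam (Q mu0) (Q mu1) X l \<partial>data_law L (Q a) (Q b) sg)"
      unfolding data_law_def[of L "Q a"] distr_mixture_law_orthogonal_transformation[OF Q, symmetric]
      using that by (intro integral_data_law_compose \<open>0 < sg\<close> borel_measurable_sq_residual) simp
    moreover have "(\<integral>X. sq_residual L lam (Q mu0) (Q mu1) (compose {..<L} Q X) l \<partial>data_law L a b sg)
        = (\<integral>X. sq_residual L lam mu0 mu1 X l \<partial>data_law L a b sg)"
      using that by (simp add: sq_residual_orthogonal_transformation[OF Q] compose_def)
    ultimately show ?thesis by simp
  qed
  then show ?thesis
    by (simp add: risk_eq_sum_sq_residual)
qed

lemma risk_uminus_mean:
  fixes a b :: "real^'d"
  assumes "0 < sg"
  shows "risk L sg lam a (- b) mu0 mu1 = risk L sg lam a b mu0 mu1"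
proof -
  have "(\<integral>X. sq_residual L lam mu0 mu1 X l \<partial>data_law L a c sg)
      = (\<integral>X. sq_residual L lam mu0 mu1 X l
           \<partial>PiM {..<L} (\<lambda>_. distr (mixture_law a c sg) borel (halfspace_fold b)))"
    if "l < L" for l c
  proof -
    have "(\<integral>X. sq_residual L lam mu0 mu1 (compose {..<L} (halfspace_fold b) X) l \<partial>data_law L a c sg)
      = (\<integral>X. sq_residual L lam mu0 mu1 X l
           \<partial>PiM {..<L} (\<lambda>_. distr (mixture_law a c sg) borel (halfspace_fold b)))"
      using that by (intro integral_data_law_compose \<open>0 < sg\<close> borel_measurable_sq_residual) simp
    then show ?thesis
      using that by (simp add: sq_residual_halfspace_fold)
  qed
  then show ?thesis
    by (simp add: risk_eq_sum_sq_residual distr_mixture_law_halfspace_fold)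
qed

lemma risk_uminus_direction: "risk L sg lam a b mu0 (- mu1) = risk L sg lam a b mu0 mu1"
  by (simp add: risk_def T_lin_def)

lemma risk_swap: "risk L sg lam a b mu0 mu1 = risk L sg lam b a mu1 mu0"
  by (simp add: risk_def T_lin_def data_law_def mixture_law_def add.commute)

section \<open>Differentiability of the risk\<close>

definition row_norm_prod :: "nat \<Rightarrow> (nat \<Rightarrow> real^'d) \<Rightarrow> real" where
  "row_norm_prod L X = (\<Prod>k<L. 1 + norm (X k))"

lemma one_le_row_norm_prod: "1 \<le> row_norm_prod L X"
  unfolding row_norm_prod_def by (intro prod_ge_1) auto

lemma row_norm_prod_pos: "0 < row_norm_prod L X"
  using one_le_row_norm_prod[of L X] by linarith

lemma norm_le_row_norm_prod: assumes "k < L" shows "norm (X k) \<le> row_norm_prod L X"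
proof -
  have "row_norm_prod L X = (1 + norm (X k)) * (\<Prod>j\<in>{..<L} - {k}. 1 + norm (X j))"
    unfolding row_norm_prod_def using assms by (subst prod.remove[of _ k]) auto
  moreover have "1 \<le> (\<Prod>j\<in>{..<L} - {k}. 1 + norm (X j))" by (intro prod_ge_1) auto
  ultimately have "1 + norm (X k) \<le> row_norm_prod L X"
    using mult_left_mono[of 1 _ "1 + norm (X k)"] by simp
  then show ?thesis by simp
qed

definition poly_bounded :: "nat \<Rightarrow> ((nat \<Rightarrow> real^'d) \<Rightarrow> 'b::real_normed_vector) \<Rightarrow> bool" where
  "poly_bounded L f \<longleftrightarrow> (\<exists>C p. 0 \<le> C \<and> (\<forall>X. norm (f X) \<le> C * row_norm_prod L X ^ p))"

lemma row_norm_prod_power_mono: "p \<le> q \<Longrightarrow> row_norm_prod L X ^ p \<le> row_norm_prod L X ^ q"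
  using one_le_row_norm_prod by (intro power_increasing) auto

lemma poly_bounded_comp: "k < L \<Longrightarrow> poly_bounded L (\<lambda>X. X k)"
  unfolding poly_bounded_def by (rule exI[of _ 1], rule exI[of _ 1]) (simp add: norm_le_row_norm_prod)

lemma poly_bounded_const: "poly_bounded L (\<lambda>X. c)"
  unfolding poly_bounded_def by (rule exI[of _ "norm c"], rule exI[of _ 0]) simp

lemma poly_bounded_add:
  assumes "poly_bounded L f" "poly_bounded L g" shows "poly_bounded L (\<lambda>X. f X + g X)"
proof -
  obtain C p where C: "0 \<le> C" "\<And>X. norm (f X) \<le> C * row_norm_prod L X ^ p" using assms(1) unfolding poly_bounded_def by blast
  obtain D q where D: "0 \<le> D" "\<And>X. norm (g X) \<le> D * row_norm_prod L X ^ q" using assms(2) unfolding poly_bounded_def by blast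
  show ?thesis unfolding poly_bounded_def
  proof (intro exI conjI allI)
    fix X
    have "norm (f X + g X) \<le> C * row_norm_prod L X ^ p + D * row_norm_prod L X ^ q" using C D norm_triangle_le add_mono by blast
    also have "\<dots> \<le> C * row_norm_prod L X ^ (p + q) + D * row_norm_prod L X ^ (p + q)"
      using C(1) D(1) by (intro add_mono mult_left_mono row_norm_prod_power_mono) auto
    finally show "norm (f X + g X) \<le> (C + D) * row_norm_prod L X ^ (p + q)" by (simp add: algebra_simps)
  qed (use C D in auto)
qed

lemma poly_bounded_uminus: "poly_bounded L f \<Longrightarrow> poly_bounded L (\<lambda>X. - f X)"
  unfolding poly_bounded_def by simp

lemma poly_bounded_diff: "poly_bounded L f \<Longrightarrow> poly_bounded L g \<Longrightarrow> poly_bounded L (\<lambda>X. f X - g X)"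
  using poly_bounded_add[of L f "\<lambda>X. - g X"] poly_bounded_uminus[of L g] by simp

lemma poly_bounded_by_product:
  assumes "poly_bounded L f" "poly_bounded L g" and H: "\<And>X. norm (h X) \<le> norm (f X) * norm (g X)"
  shows "poly_bounded L h"
proof -
  obtain C p where C: "0 \<le> C" "\<And>X. norm (f X) \<le> C * row_norm_prod L X ^ p" using assms(1) unfolding poly_bounded_def by blast
  obtain D q where D: "0 \<le> D" "\<And>X. norm (g X) \<le> D * row_norm_prod L X ^ q" using assms(2) unfolding poly_bounded_def by blast
  show ?thesis unfolding poly_bounded_def
  proof (intro exI conjI allI)
    fix X
    have "norm (h X) \<le> norm (f X) * norm (g X)" by (rule H)
    also have "\<dots> \<le> (C * row_norm_prod L X ^ p) * (D * row_norm_prod L X ^ q)"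
    proof -
      have "0 \<le> C * row_norm_prod L X ^ p" using C(1) row_norm_prod_pos[of L X] by simp
      then show ?thesis using C D by (intro mult_mono) auto
    qed
    finally show "norm (h X) \<le> (C * D) * row_norm_prod L X ^ (p + q)" by (simp add: algebra_simps power_add)
  qed (use C D in auto)
qed

lemma poly_bounded_inner: "poly_bounded L f \<Longrightarrow> poly_bounded L g \<Longrightarrow> poly_bounded L (\<lambda>X. f X \<bullet> g X)"
  by (rule poly_bounded_by_product[where f=f and g=g]) (auto simp: Cauchy_Schwarz_ineq2)

lemma poly_bounded_scaleR: "poly_bounded L f \<Longrightarrow> poly_bounded L g \<Longrightarrow> poly_bounded L (\<lambda>X. f X *\<^sub>R g X)"
  by (rule poly_bounded_by_product[where f=f and g=g]) auto

lemma poly_bounded_mult: "poly_bounded L f \<Longrightarrow> poly_bounded L g \<Longrightarrow> poly_bounded L (\<lambda>X. f X * (g X :: real))"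
  by (rule poly_bounded_by_product[where f=f and g=g]) (auto simp: abs_mult)

lemma poly_bounded_sum:
  assumes "finite S" "\<And>i. i \<in> S \<Longrightarrow> poly_bounded L (f i)"
  shows "poly_bounded L (\<lambda>X. \<Sum>i\<in>S. f i X)"
  using assms
proof (induction S rule: finite_induct)
  case empty then show ?case using poly_bounded_const[of L 0] by simp
next
  case (insert x F) then show ?case by (simp add: poly_bounded_add)
qed

lemma integrable_row_norm_prod_power:
  fixes a b :: "real^'d"
  assumes sg: "0 < sg"
  shows "integrable (data_law L a b sg) (\<lambda>X. row_norm_prod L X ^ p)"
proof -
  interpret product_prob_space "\<lambda>_::nat. (mixture_law a b sg :: (real^'d) measure)"
    by (intro product_prob_spaceI prob_space_mixture_law[OF sg])
  have "integrable (PiM {..<L} (\<lambda>_. mixture_law a b sg)) (\<lambda>X::nat \<Rightarrow> real^'d. \<Prod>k<L. (1 + norm (X k)) ^ p)"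
    by (rule product_integrable_prod) (auto intro: integrable_mixture_law_poly[OF sg])
  then show ?thesis by (simp add: data_law_def row_norm_prod_def prod_power_distrib)
qed

lemma integrable_poly_bounded:
  fixes f :: "(nat \<Rightarrow> real^'d) \<Rightarrow> 'b::{banach,second_countable_topology}"
  assumes sg: "0 < sg" and pb: "poly_bounded L f" and m: "f \<in> borel_measurable (data_law L a b sg)"
  shows "integrable (data_law L a b sg) f"
proof -
  obtain C p where C: "0 \<le> C" "\<And>X. norm (f X) \<le> C * row_norm_prod L X ^ p" using pb unfolding poly_bounded_def by blast
  show ?thesis
  proof (rule Bochner_Integration.integrable_bound[OF _ m])
    show "integrable (data_law L a b sg) (\<lambda>X. C * row_norm_prod L X ^ p)"
      by (intro integrable_mult_right integrable_row_norm_prod_power[OF sg])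
    show "AE X in data_law L a b sg. norm (f X) \<le> norm (C * row_norm_prod L X ^ p)"
      using C row_norm_prod_pos by (intro AE_I2) (auto intro: order_trans[OF C(2)])
  qed
qed

lemma bilinear_Basis_expansion:
  fixes h :: "'v::euclidean_space \<Rightarrow> 'v \<Rightarrow> 'w::real_vector"
  assumes "bilinear h"
  shows "h m m = (\<Sum>p\<in>Basis \<times> Basis. ((m \<bullet> fst p) * (m \<bullet> snd p)) *\<^sub>R h (fst p) (snd p))"
proof -
  have "h m m = h (\<Sum>i\<in>Basis. (m \<bullet> i) *\<^sub>R i) (\<Sum>j\<in>Basis. (m \<bullet> j) *\<^sub>R j)"
    by (simp add: euclidean_representation)
  also have "\<dots> = (\<Sum>(i,j)\<in>Basis \<times> Basis. h ((m \<bullet> i) *\<^sub>R i) ((m \<bullet> j) *\<^sub>R j))"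
    by (rule bilinear_sum[OF assms])
  also have "\<dots> = (\<Sum>p\<in>Basis \<times> Basis. ((m \<bullet> fst p) * (m \<bullet> snd p)) *\<^sub>R h (fst p) (snd p))"
    by (intro sum.cong) (auto simp: bilinear_lmul[OF assms] bilinear_rmul[OF assms])
  finally show ?thesis .
qed

lemma inner_diff_self: "(x - y) \<bullet> (x - y) = x \<bullet> x - 2 * (x \<bullet> y) + y \<bullet> (y::'a::real_inner)"
  by (simp add: inner_diff_left inner_diff_right inner_commute)

lemma differentiable_integral_sq_norm_bilinear:
  fixes a :: "'x \<Rightarrow> 'v::euclidean_space" and B :: "'x \<Rightarrow> 'v \<Rightarrow> 'v \<Rightarrow> 'v"
  assumes bil: "\<And>X. bilinear (B X)"
    and Iaa: "integrable M (\<lambda>X. a X \<bullet> a X)"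
    and Iaw: "\<And>i j. integrable M (\<lambda>X. a X \<bullet> B X i j)"
    and Iww: "\<And>i j k l. integrable M (\<lambda>X. B X i j \<bullet> B X k l)"
  shows "(\<lambda>m. \<integral>X. (norm (a X - B X m m))\<^sup>2 \<partial>M) differentiable (at m0)"
proof -
  define P where "P = (Basis :: 'v set) \<times> (Basis :: 'v set)"
  define c where "c m p = (m \<bullet> fst p) * (m \<bullet> snd p)" for m :: 'v and p :: "'v \<times> 'v"
  define W where "W X p = B X (fst p) (snd p)" for X p
  define A0 where "A0 = integral\<^sup>L M (\<lambda>X. a X \<bullet> a X)"
  define A where "A p = integral\<^sup>L M (\<lambda>X. a X \<bullet> W X p)" for p
  define C where "C p q = integral\<^sup>L M (\<lambda>X. W X q \<bullet> W X p)" for p q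
  have Bexp: "B X m m = (\<Sum>p\<in>P. c m p *\<^sub>R W X p)" for X m
    unfolding P_def c_def W_def by (rule bilinear_Basis_expansion[OF bil])
  have pt: "(norm (a X - B X m m))\<^sup>2 = a X \<bullet> a X - 2 * (\<Sum>p\<in>P. c m p * (a X \<bullet> W X p))
      + (\<Sum>p\<in>P. c m p * (\<Sum>q\<in>P. c m q * (W X q \<bullet> W X p)))" for X m
    unfolding power2_norm_eq_inner inner_diff_self Bexp
    by (simp add: inner_sum_left inner_sum_right)
  have hb: "has_bochner_integral M (\<lambda>X. (norm (a X - B X m m))\<^sup>2)
      (A0 - 2 * (\<Sum>p\<in>P. c m p * A p) + (\<Sum>p\<in>P. c m p * (\<Sum>q\<in>P. c m q * C p q)))" for m
    unfolding pt A0_def A_def C_def W_def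
    by (intro has_bochner_integral_diff has_bochner_integral_add has_bochner_integral_sum
        has_bochner_integral_mult_right has_bochner_integral_integrable Iaa Iaw Iww)
  have eq: "(\<lambda>m. integral\<^sup>L M (\<lambda>X. (norm (a X - B X m m))\<^sup>2))
      = (\<lambda>m. A0 - 2 * (\<Sum>p\<in>P. c m p * A p) + (\<Sum>p\<in>P. c m p * (\<Sum>q\<in>P. c m q * C p q)))"
    using hb by (auto intro!: has_bochner_integral_integral_eq)
  have fP: "finite P" unfolding P_def by simp
  show ?thesis unfolding eq c_def
    using fP by (intro differentiable_add differentiable_diff differentiable_mult differentiable_sum differentiable_const
      differentiable_inner differentiable_ident ballI)
qed

definition residual_offset :: "nat \<Rightarrow> real \<Rightarrow> nat \<Rightarrow> real^'d \<Rightarrow> (nat \<Rightarrow> real^'d) \<Rightarrow> real^'d" where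
  "residual_offset L lam l m1 X = X l - (2 / real L) *\<^sub>R (\<Sum>k<L. (lam * ((X l \<bullet> m1) * (m1 \<bullet> X k))) *\<^sub>R X k)"

definition residual_bilinear :: "nat \<Rightarrow> real \<Rightarrow> nat \<Rightarrow> (nat \<Rightarrow> real^'d) \<Rightarrow> real^'d \<Rightarrow> real^'d \<Rightarrow> real^'d" where
  "residual_bilinear L lam l X u v = (2 / real L) *\<^sub>R (\<Sum>k<L. (lam * ((X l \<bullet> u) * (v \<bullet> X k))) *\<^sub>R X k)"

lemma residual_split: "X l - T_lin L lam m m1 X l = residual_offset L lam l m1 X - residual_bilinear L lam l X m m"
  unfolding T_lin_def residual_offset_def residual_bilinear_def
  by (simp add: distrib_left scaleR_add_left sum.distrib scaleR_add_right algebra_simps)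

lemma bilinear_residual_bilinear: "bilinear (residual_bilinear L lam l X)"
  unfolding bilinear_def residual_bilinear_def
  by (auto intro!: linearI simp: inner_add_left inner_add_right algebra_simps scaleR_add_left sum.distrib
      scaleR_sum_right add_divide_distrib)

lemma poly_bounded_residual_offset: "l < L \<Longrightarrow> poly_bounded L (\<lambda>X. residual_offset L lam l m1 X)"
  unfolding residual_offset_def
  by (intro poly_bounded_diff poly_bounded_scaleR poly_bounded_sum poly_bounded_mult poly_bounded_inner poly_bounded_comp poly_bounded_const) auto

lemma poly_bounded_residual_bilinear: "l < L \<Longrightarrow> poly_bounded L (\<lambda>X. residual_bilinear L lam l X u v)"
  unfolding residual_bilinear_def
  by (intro poly_bounded_diff poly_bounded_scaleR poly_bounded_sum poly_bounded_mult poly_bounded_inner poly_bounded_comp poly_bounded_const) auto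

lemma borel_measurable_residual_offset:
  fixes a b :: "real^'d"
  shows "l < L \<Longrightarrow> (\<lambda>X. residual_offset L lam l m1 X) \<in> borel_measurable (data_law L a b sg)"
  unfolding residual_offset_def
  by (intro borel_measurable_inner borel_measurable_diff borel_measurable_scaleR borel_measurable_sum
      borel_measurable_times borel_measurable_add borel_measurable_const borel_measurable_data_law_component) auto

lemma borel_measurable_residual_bilinear:
  fixes a b :: "real^'d"
  shows "l < L \<Longrightarrow> (\<lambda>X. residual_bilinear L lam l X u v) \<in> borel_measurable (data_law L a b sg)"
  unfolding residual_bilinear_def
  by (intro borel_measurable_inner borel_measurable_diff borel_measurable_scaleR borel_measurable_sum
      borel_measurable_times borel_measurable_add borel_measurable_const borel_measurable_data_law_component) auto

lemma risk_differentiable_first: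
  fixes a b :: "real^'d"
  assumes "0 < sg"
  shows "(\<lambda>m. risk L sg lam a b m mu1) differentiable (at mu0)"
proof -
  have "(\<lambda>m. \<integral>X. (norm (residual_offset L lam l mu1 X - residual_bilinear L lam l X m m))\<^sup>2
      \<partial>data_law L a b sg) differentiable (at mu0)" if "l < L" for l
    by (intro differentiable_integral_sq_norm_bilinear[where B="residual_bilinear L lam l"] bilinear_residual_bilinear
        integrable_poly_bounded[OF \<open>0 < sg\<close>] poly_bounded_inner poly_bounded_residual_offset
        poly_bounded_residual_bilinear borel_measurable_inner borel_measurable_residual_offset
        borel_measurable_residual_bilinear) (simp_all add: that)
  then show ?thesis
    unfolding risk_eq_sum_sq_residual sq_residual_def residual_split
    by (intro differentiable_mult differentiable_const differentiable_sum) auto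
qed

lemma differentiable_imp_has_gradient:
  fixes f :: "'v::euclidean_space \<Rightarrow> real"
  assumes "f differentiable (at x)"
  obtains g where "(f has_derivative (\<lambda>h. g \<bullet> h)) (at x)"
proof -
  obtain D where D: "(f has_derivative D) (at x)"
    using assms unfolding differentiable_def by blast
  then have "linear D"
    using has_derivative_linear by blast
  then have "D h = adjoint D 1 \<bullet> h" for h
    by (simp add: adjoint_works inner_commute)
  then show ?thesis
    using D that by (metis (no_types) ext)
qed

lemma The_gradient_eq:
  fixes f :: "'v::euclidean_space \<Rightarrow> real"
  assumes "(f has_derivative (\<lambda>h. g \<bullet> h)) (at x)"
  shows "(THE g. (f has_derivative (\<lambda>h. g \<bullet> h)) (at x)) = g"
proof (rule the_equality)
  fix g'
  assume "(f has_derivative (\<lambda>h. g' \<bullet> h)) (at x)"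
  then have "(\<lambda>h. g' \<bullet> h) = (\<lambda>h. g \<bullet> h)"
    using has_derivative_unique assms by blast
  then show "g' = g"
    by (metis vector_eq_rdot)
qed (rule assms)

lemma risk_has_derivative_grad0:
  fixes a b :: "real^'d"
  assumes "0 < sg"
  shows "((\<lambda>m. risk L sg lam a b m mu1) has_derivative (\<lambda>h. grad0 L sg lam a b mu0 mu1 \<bullet> h)) (at mu0)"
proof -
  obtain g where "((\<lambda>m. risk L sg lam a b m mu1) has_derivative (\<lambda>h. g \<bullet> h)) (at mu0)"
    using differentiable_imp_has_gradient[OF risk_differentiable_first[OF assms]] .
  then show ?thesis
    unfolding grad0_def by (simp add: The_gradient_eq)
qed

lemma grad1_eq_grad0_swap: "grad1 L sg lam a b mu0 mu1 = grad0 L sg lam b a mu1 mu0"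
  unfolding grad0_def grad1_def by (subst risk_swap) (rule refl)

lemma gradient_fixed_by_orthogonal_symmetry:
  fixes f :: "'v::euclidean_space \<Rightarrow> real"
  assumes f: "(f has_derivative (\<lambda>h. g \<bullet> h)) (at x)"
    and Q: "orthogonal_transformation Q" and "Q x = x" and inv: "\<And>y. f (Q y) = f y"
  shows "Q g = g"
proof -
  have "linear Q" and QQ: "\<And>v w. Q v \<bullet> Q w = v \<bullet> w"
    using Q by (auto simp: orthogonal_transformation_def)
  have "(Q has_derivative Q) (at x)"
    using \<open>linear Q\<close> by (rule linear_imp_has_derivative)
  then have "((\<lambda>y. f (Q y)) has_derivative (\<lambda>h. g \<bullet> Q h)) (at x)"
    using has_derivative_compose[of Q Q x UNIV f] f \<open>Q x = x\<close> by simp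
  then have "(\<lambda>h. g \<bullet> Q h) = (\<lambda>h. g \<bullet> h)"
    using has_derivative_unique f by (simp add: inv)
  then have "g \<bullet> Q g = g \<bullet> g"
    by metis
  then have "(Q g - g) \<bullet> (Q g - g) = 0"
    by (simp add: inner_diff_left inner_diff_right QQ inner_commute)
  then show ?thesis
    by simp
qed

section \<open>Reflection through a plane\<close>

(* The second vector of the Gram-Schmidt basis of span {a, u}; it is 0 when u is parallel to a,
   since scaling by 1 / norm 0 = 0. *)
definition plane_unit :: "real^'d \<Rightarrow> real^'d \<Rightarrow> real^'d" where
  "plane_unit a u = (1 / norm (u - (u \<bullet> a) *\<^sub>R a)) *\<^sub>R (u - (u \<bullet> a) *\<^sub>R a)"

definition plane_projection :: "real^'d \<Rightarrow> real^'d \<Rightarrow> real^'d \<Rightarrow> real^'d" where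
  "plane_projection a u x = (x \<bullet> a) *\<^sub>R a + (x \<bullet> plane_unit a u) *\<^sub>R plane_unit a u"

definition plane_reflection :: "real^'d \<Rightarrow> real^'d \<Rightarrow> real^'d \<Rightarrow> real^'d" where
  "plane_reflection a u x = 2 *\<^sub>R plane_projection a u x - x"

lemma plane_unit:
  fixes a u :: "real^'d"
  assumes "norm a = 1"
  shows plane_unit_orthogonal: "plane_unit a u \<bullet> a = 0"
    and inner_plane_unit_self: "(x \<bullet> plane_unit a u) * (plane_unit a u \<bullet> plane_unit a u) = x \<bullet> plane_unit a u"
    and plane_unit_in_span: "plane_unit a u \<in> span {a, u}"
    and plane_unit_decomposition: "(u \<bullet> a) *\<^sub>R a + (u \<bullet> plane_unit a u) *\<^sub>R plane_unit a u = u"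
proof -
  define w where "w = u - (u \<bullet> a) *\<^sub>R a"
  have e: "plane_unit a u = (1 / norm w) *\<^sub>R w"
    by (simp add: plane_unit_def w_def)
  have aa: "a \<bullet> a = 1"
    using assms by (simp add: power2_norm_eq_inner[symmetric])
  show "plane_unit a u \<bullet> a = 0"
    by (simp add: e w_def inner_diff_left aa)
  show "(x \<bullet> plane_unit a u) * (plane_unit a u \<bullet> plane_unit a u) = x \<bullet> plane_unit a u"
    by (cases "w = 0") (simp_all add: e power2_norm_eq_inner[symmetric] divide_simps)
  show "plane_unit a u \<in> span {a, u}"
    unfolding e w_def by (intro span_mul span_diff span_base) auto
  show "(u \<bullet> a) *\<^sub>R a + (u \<bullet> plane_unit a u) *\<^sub>R plane_unit a u = u"
  proof (cases "w = 0")
    case False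
    have "u \<bullet> w = w \<bullet> w"
      by (simp add: w_def inner_diff_left inner_diff_right aa inner_commute)
    then have "u \<bullet> plane_unit a u = norm w"
      by (simp add: e power2_norm_eq_inner[symmetric] power2_eq_square)
    then show ?thesis
      using False by (simp add: e w_def)
  qed (simp add: e w_def algebra_simps)
qed

lemma plane_projection:
  fixes a u :: "real^'d"
  assumes "norm a = 1"
  shows linear_plane_projection: "linear (plane_projection a u)"
    and plane_projection_self_adjoint: "plane_projection a u x \<bullet> y = x \<bullet> plane_projection a u y"
    and plane_projection_idem: "plane_projection a u (plane_projection a u x) = plane_projection a u x"
    and plane_projection_fixes_span: "x \<in> span {a, u} \<Longrightarrow> plane_projection a u x = x"
    and plane_projection_in_span: "plane_projection a u x \<in> span {a, u}"
    and plane_projection_orthogonal: "z \<bullet> a = 0 \<Longrightarrow> z \<bullet> u = 0 \<Longrightarrow> plane_projection a u z = 0"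
proof -
  let ?e = "plane_unit a u" and ?P = "plane_projection a u"
  have aa: "a \<bullet> a = 1"
    using assms by (simp add: power2_norm_eq_inner[symmetric])
  have ea: "?e \<bullet> a = 0" "a \<bullet> ?e = 0"
    using plane_unit_orthogonal[OF assms] by (simp_all add: inner_commute)
  show lin: "linear ?P"
    unfolding plane_projection_def by (auto intro!: linearI simp: inner_add_left algebra_simps)
  show "?P x \<bullet> y = x \<bullet> ?P y" for x y
    by (simp add: plane_projection_def inner_add_left inner_add_right inner_commute mult.commute)
  have "?P x \<bullet> a = x \<bullet> a" "?P x \<bullet> ?e = x \<bullet> ?e" for x
    using inner_plane_unit_self[OF assms, of x] by (simp_all add: plane_projection_def inner_add_left ea aa)
  then show "?P (?P x) = ?P x" for x
    by (simp add: plane_projection_def[of a u "?P x"]) (simp add: plane_projection_def)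
  have "?P y = id y" if "y \<in> {a, u}" for y
    using that plane_unit_decomposition[OF assms] by (auto simp: plane_projection_def aa ea)
  then show "?P x = x" if "x \<in> span {a, u}"
    using linear_eq_on_span[OF lin linear_id _ that] by simp
  show "?P x \<in> span {a, u}"
    unfolding plane_projection_def
    by (intro span_add span_mul plane_unit_in_span[OF assms] span_base) simp
  show "z \<bullet> a = 0 \<Longrightarrow> z \<bullet> u = 0 \<Longrightarrow> ?P z = 0"
    by (simp add: plane_projection_def plane_unit_def inner_diff_right)
qed

lemma plane_reflection:
  fixes a u :: "real^'d"
  assumes "norm a = 1"
  shows orthogonal_transformation_plane_reflection: "orthogonal_transformation (plane_reflection a u)"
    and plane_reflection_fixes_span: "x \<in> span {a, u} \<Longrightarrow> plane_reflection a u x = x"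
    and plane_reflection_orthogonal: "z \<bullet> a = 0 \<Longrightarrow> z \<bullet> u = 0 \<Longrightarrow> plane_reflection a u z = - z"
    and plane_reflection_fixed_imp_span: "plane_reflection a u g = g \<Longrightarrow> g \<in> span {a, u}"
proof -
  have "linear (plane_reflection a u)"
    unfolding plane_reflection_def[abs_def] using linear_plane_projection[OF assms]
    by (intro linear_compose_sub linear_compose_scale_right linear_id[unfolded id_def])
  moreover have "plane_reflection a u x \<bullet> plane_reflection a u y = x \<bullet> y" for x y
    by (simp add: plane_reflection_def inner_diff_left inner_diff_right plane_projection_self_adjoint[OF assms] plane_projection_idem[OF assms])
  ultimately show "orthogonal_transformation (plane_reflection a u)"
    by (simp add: orthogonal_transformation_def)
  show "plane_reflection a u x = x" if "x \<in> span {a, u}"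
    using plane_projection_fixes_span[OF assms that] by (simp add: plane_reflection_def scaleR_2)
  show "z \<bullet> a = 0 \<Longrightarrow> z \<bullet> u = 0 \<Longrightarrow> plane_reflection a u z = - z"
    by (simp add: plane_reflection_def plane_projection_orthogonal[OF assms])
  assume "plane_reflection a u g = g"
  then have "2 *\<^sub>R plane_projection a u g = 2 *\<^sub>R g"
    unfolding plane_reflection_def by (simp add: eq_diff_eq scaleR_2)
  then show "g \<in> span {a, u}"
    using plane_projection_in_span[OF assms, of u g] by simp
qed

section \<open>Invariance of the manifold\<close>

lemma risk_plane_reflection_invariant:
  fixes ms0 ms1 mu0 mu1 :: "real^'d"
  assumes "0 < sg" "norm ms0 = 1"
    and "ms1 \<bullet> ms0 = 0" "ms1 \<bullet> mu0 = 0" "mu1 \<bullet> ms0 = 0" "mu1 \<bullet> mu0 = 0"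
  shows "risk L sg lam ms0 ms1 (plane_reflection ms0 mu0 m) mu1 = risk L sg lam ms0 ms1 m mu1"
proof -
  let ?Q = "plane_reflection ms0 mu0"
  have Q: "orthogonal_transformation ?Q"
    using assms(2) by (rule orthogonal_transformation_plane_reflection)
  have "?Q ms0 = ms0"
    using assms(2) by (simp add: plane_reflection_fixes_span span_base)
  moreover have "?Q ms1 = - ms1" "?Q mu1 = - mu1"
    using assms by (simp_all add: plane_reflection_orthogonal)
  ultimately have "risk L sg lam ms0 ms1 (?Q m) mu1 = risk L sg lam (?Q ms0) (- ?Q ms1) (?Q m) (- ?Q mu1)"
    by simp
  also have "\<dots> = risk L sg lam (?Q ms0) (?Q ms1) (?Q m) (?Q mu1)"
    by (simp add: risk_uminus_mean[OF \<open>0 < sg\<close>] risk_uminus_direction)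
  also have "\<dots> = risk L sg lam ms0 ms1 m mu1"
    by (rule risk_orthogonal_transformation[OF Q \<open>0 < sg\<close>])
  finally show ?thesis .
qed

lemma grad0_in_span:
  fixes ms0 ms1 mu0 mu1 :: "real^'d"
  assumes "0 < sg" "norm ms0 = 1"
    and "ms1 \<bullet> ms0 = 0" "ms1 \<bullet> mu0 = 0" "mu1 \<bullet> ms0 = 0" "mu1 \<bullet> mu0 = 0"
  shows "grad0 L sg lam ms0 ms1 mu0 mu1 \<in> span {ms0, mu0}"
proof (rule plane_reflection_fixed_imp_span[OF \<open>norm ms0 = 1\<close>])
  show "plane_reflection ms0 mu0 (grad0 L sg lam ms0 ms1 mu0 mu1) = grad0 L sg lam ms0 ms1 mu0 mu1"
    using assms
    by (intro gradient_fixed_by_orthogonal_symmetry[OF risk_has_derivative_grad0]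
        orthogonal_transformation_plane_reflection plane_reflection_fixes_span
        risk_plane_reflection_invariant span_base) simp_all
qed

lemma sphere_step_in_span: "mu \<in> span S \<Longrightarrow> g \<in> span S \<Longrightarrow> sphere_step gamma mu g \<in> span S"
  unfolding sphere_step_def Let_def by (intro span_mul span_diff) simp_all

lemma norm_sphere_step:
  assumes "norm mu = 1"
  shows "norm (sphere_step gamma mu g) = 1"
proof -
  define v where "v = mu - gamma *\<^sub>R (g - (mu \<bullet> g) *\<^sub>R mu)"
  have "mu \<bullet> mu = 1"
    using assms by (simp add: power2_norm_eq_inner[symmetric])
  then have "v \<bullet> mu = 1"
    by (simp add: v_def inner_diff_left inner_commute[of g mu])
  then have "v \<noteq> 0"
    by auto
  then show ?thesis
    by (simp add: sphere_step_def v_def[symmetric])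
qed

lemma inner_span_pair_eq_0:
  assumes "x \<in> span {a, b}" "y \<in> span {c, d}"
    and "a \<bullet> c = 0" "a \<bullet> d = 0" "b \<bullet> c = 0" "b \<bullet> d = 0"
  shows "x \<bullet> y = 0"
proof -
  have "orthogonal z x" if "z \<in> {c, d}" for z
    using that assms(3-6) by (intro orthogonal_to_span[OF assms(1)]) (auto simp: orthogonal_def inner_commute)
  then have "orthogonal x y"
    using orthogonal_to_span[OF assms(2)] by (simp add: orthogonal_commute)
  then show ?thesis
    by (simp add: orthogonal_def)
qed

theorem lemma4:
  fixes ms0 ms1 mu0 mu1 :: "real^'d" and L :: nat and sg lam gamma :: real
  assumes "CARD('d) \<ge> 2" and "L \<ge> 1" and "sg > 0" and "lam > 0" and "gamma > 0"
    and "norm ms0 = 1" and "norm ms1 = 1" and "ms0 \<bullet> ms1 = 0"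
    and "(mu0, mu1) \<in> manifoldM ms0 ms1"
  shows "pgd_step L sg lam gamma ms0 ms1 (mu0, mu1) \<in> manifoldM ms0 ms1"
proof -
  have M: "norm mu0 = 1" "norm mu1 = 1" "ms1 \<bullet> mu0 = 0" "ms0 \<bullet> mu1 = 0" "mu0 \<bullet> mu1 = 0"
    using assms(9) by (auto simp: manifoldM_def)
  let ?nu0 = "sphere_step gamma mu0 (grad0 L sg lam ms0 ms1 mu0 mu1)"
  let ?nu1 = "sphere_step gamma mu1 (grad1 L sg lam ms0 ms1 mu0 mu1)"
  have "grad0 L sg lam ms0 ms1 mu0 mu1 \<in> span {ms0, mu0}"
    using assms M by (intro grad0_in_span) (simp_all add: inner_commute)
  then have nu0: "?nu0 \<in> span {ms0, mu0}"
    by (simp add: sphere_step_in_span span_base)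
  have "grad1 L sg lam ms0 ms1 mu0 mu1 \<in> span {ms1, mu1}"
    unfolding grad1_eq_grad0_swap using assms M by (intro grad0_in_span) (simp_all add: inner_commute)
  then have nu1: "?nu1 \<in> span {ms1, mu1}"
    by (simp add: sphere_step_in_span span_base)
  have "x \<bullet> y = 0" if "x \<in> span {ms0, mu0}" "y \<in> span {ms1, mu1}" for x y
    using assms(8) M by (intro inner_span_pair_eq_0[OF that]) (simp_all add: inner_commute)
  from this[OF nu0 nu1] this[OF nu0 span_base] this[OF span_base nu1]
  show ?thesis
    using M by (simp add: pgd_step_def manifoldM_def norm_sphere_step inner_commute[of ms1])
qed

end
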